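(* Let $p\in(0,1)$, let $\mathbb D[0,1]\subset\mathbb{C}$ be the open disk having the segment $[0,1]$ as a diameter, and define on holomorphic functions $f$ on $\mathbb D[0,1]$ \[ \mathcal B_p f(z)=\frac{p}{(1+z)^2}f\!\left(\frac1{1+z}\right)+\frac{1-p}{(1+z)^2}f\!\left(1-\frac1{1+z}\right), \] \[ \mathcal A_p f(z)=\sum_{n=2}^\infty\left[\frac{p}{(n+z)^2}f\!\left(\frac1{n+z}\right)+\frac{1-p}{(n+z)^2}f\!\left(1-\frac1{n+z}\right)\right]. \] Then the operator $\widehat{\mathcal L}_p=\mathcal A_p(1-\mathcal B_p)^{-1}$ is a well-defined nuclear operator on $\mathcal H^\infty(\mathbb D[0,1])$.
   Context: $\mathcal H^\infty(\mathbb D[0,1])$ denotes the Banach space of bounded holomorphic functions on $\mathbb D[0,1]$ with the supremum norm. *)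

theory Defs
  imports "HOL-Analysis.Analysis"
begin

definition Dsk :: "complex set" where
  "Dsk = ball (1/2) (1/2)"

text \<open>H-infinity of the disk, realised as functions that are holomorphic and bounded on
  the disk and (as a normalisation, so that equality of functions is equality on the disk)
  zero outside it.\<close>
definition Hinf :: "(complex \<Rightarrow> complex) set" where
  "Hinf = {f. f holomorphic_on Dsk \<and> bounded (f ` Dsk) \<and> (\<forall>z. z \<notin> Dsk \<longrightarrow> f z = 0)}"

definition hnorm :: "(complex \<Rightarrow> complex) \<Rightarrow> real" where
  "hnorm f = (SUP z\<in>Dsk. norm (f z))"

definition bdd_functional :: "((complex \<Rightarrow> complex) \<Rightarrow> complex) \<Rightarrow> bool" where
  "bdd_functional \<phi> \<longleftrightarrow>
     (\<forall>f\<in>Hinf. \<forall>g\<in>Hinf. \<phi> (\<lambda>z. f z + g z) = \<phi> f + \<phi> g) \<and>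
     (\<forall>f\<in>Hinf. \<forall>c. \<phi> (\<lambda>z. c * f z) = c * \<phi> f) \<and>
     (\<exists>C. \<forall>f\<in>Hinf. norm (\<phi> f) \<le> C * hnorm f)"

definition fnorm :: "((complex \<Rightarrow> complex) \<Rightarrow> complex) \<Rightarrow> real" where
  "fnorm \<phi> = Sup {norm (\<phi> f) | f. f \<in> Hinf \<and> hnorm f \<le> 1}"

definition nuclear_Hinf :: "((complex \<Rightarrow> complex) \<Rightarrow> (complex \<Rightarrow> complex)) \<Rightarrow> bool" where
  "nuclear_Hinf L \<longleftrightarrow>
     (\<exists>\<phi> :: nat \<Rightarrow> (complex \<Rightarrow> complex) \<Rightarrow> complex. \<exists>g :: nat \<Rightarrow> complex \<Rightarrow> complex.
        (\<forall>n. bdd_functional (\<phi> n)) \<and> (\<forall>n. g n \<in> Hinf) \<and>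
        summable (\<lambda>n. fnorm (\<phi> n) * hnorm (g n)) \<and>
        (\<forall>f\<in>Hinf. \<forall>z. L f z = (\<Sum>n. \<phi> n f * g n z)))"

definition Bop :: "real \<Rightarrow> (complex \<Rightarrow> complex) \<Rightarrow> (complex \<Rightarrow> complex)" where
  "Bop p f = (\<lambda>z. if z \<in> Dsk then
      of_real p / (1 + z)^2 * f (1 / (1 + z)) + (1 - of_real p) / (1 + z)^2 * f (1 - 1 / (1 + z))
    else 0)"

definition Aterm :: "real \<Rightarrow> (complex \<Rightarrow> complex) \<Rightarrow> complex \<Rightarrow> nat \<Rightarrow> complex" where
  "Aterm p f z n = of_real p / (of_nat n + z)^2 * f (1 / (of_nat n + z))
      + (1 - of_real p) / (of_nat n + z)^2 * f (1 - 1 / (of_nat n + z))"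

definition Aop :: "real \<Rightarrow> (complex \<Rightarrow> complex) \<Rightarrow> (complex \<Rightarrow> complex)" where
  "Aop p f = (\<lambda>z. if z \<in> Dsk then (\<Sum>n. Aterm p f z (n + 2)) else 0)"

end

theory Submission
  imports Defs "HOL-Complex_Analysis.Complex_Analysis"
begin

(* The inverse of 1 - B_p is the Neumann series of B_p. The operator B_p does not increase
   sup norms, and since |1 + 1/(1+z)| >= 5/4 on the disk, B_p^2 contracts them by the factor
   1 - 9p/25. The terms of A_p g are O(1/n^2) on the whole half-plane Re z > -1, so
   A_p (1 - B_p)^-1 f extends holomorphically to the disk of radius 3/2 around 1/2, bounded by a
   multiple of the sup norm of f. By the Cauchy estimates its Taylor coefficients at 1/2 are
   uniformly bounded functionals of f, while the monomials (z - 1/2)^k have sup norm 2^-k on the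
   disk; the Taylor expansion is therefore a nuclear representation. *)

lemma Dsk_iff: "z \<in> Dsk \<longleftrightarrow> (cmod z)^2 < Re z"
proof -
  have "z \<in> Dsk \<longleftrightarrow> (cmod (z - 1/2))^2 < (1/2)^2"
    unfolding Dsk_def mem_ball dist_norm norm_minus_commute[of "1/2"]
    by (metis norm_ge_zero power_strict_mono power2_less_imp_less zero_le_divide_iff
        zero_le_one zero_le_numeral pos2)
  also have "(cmod (z - 1/2))^2 = (cmod z)^2 - Re z + 1/4"
    unfolding cmod_power2 by (simp add: power2_eq_square algebra_simps)
  finally show ?thesis by (simp add: power2_eq_square)
qed

lemma Re_pos_if_in_Dsk: "z \<in> Dsk \<Longrightarrow> 0 < Re z"
  by (metis Dsk_iff le_less_trans zero_le_power2 norm_ge_zero)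

lemma one_le_norm_one_plus: "0 \<le> Re z \<Longrightarrow> 1 \<le> cmod (1 + z)"
  using complex_Re_le_cmod[of "1 + z"] by simp

lemma one_le_norm_one_plus_squared: "z \<in> Dsk \<Longrightarrow> 1 \<le> (cmod (1 + z))^2"
  using one_le_norm_one_plus[of z] Re_pos_if_in_Dsk[of z] by (simp add: one_le_power)

lemma inverse_one_plus_in_Dsk:
  assumes "0 < Re u" shows "1 / (1 + u) \<in> Dsk"
proof -
  have "1 \<le> cmod (1 + u)" using assms by (intro one_le_norm_one_plus) simp
  then have nz: "0 < cmod (1 + u)" by linarith
  have "(cmod (1 / (1 + u)))^2 = 1 / (cmod (1 + u))^2"
    by (simp add: norm_divide power_divide)
  moreover have "Re (1 / (1 + u)) = (1 + Re u) / (cmod (1 + u))^2"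
    unfolding cmod_power2 by (simp add: Re_divide)
  ultimately show ?thesis unfolding Dsk_iff using nz assms by (simp add: divide_strict_right_mono)
qed

lemma one_minus_inverse_one_plus_in_Dsk:
  assumes "0 < Re u" shows "1 - 1 / (1 + u) \<in> Dsk"
proof -
  have "1 \<le> cmod (1 + u)" using assms by (intro one_le_norm_one_plus) simp
  then have nz: "0 < cmod (1 + u)" by linarith
  then have eq: "1 - 1 / (1 + u) = u / (1 + u)" by (auto simp: field_simps)
  have "(cmod (u / (1 + u)))^2 = (cmod u)^2 / (cmod (1 + u))^2"
    by (simp add: norm_divide power_divide)
  moreover have "Re (u / (1 + u)) = (Re u + (cmod u)^2) / (cmod (1 + u))^2"
    unfolding cmod_power2 by (simp add: Re_divide power2_eq_square algebra_simps)
  ultimately show ?thesis unfolding Dsk_iff eq using nz assms by (simp add: divide_strict_right_mono)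
qed

lemma norm_one_plus_inverse_ge:
  assumes z: "z \<in> Dsk" shows "5/4 \<le> cmod (1 + 1 / (1 + z))"
proof -
  have "cmod (1 + z) \<le> cmod (z - 1/2) + 3/2"
    using norm_triangle_ineq[of "z - 1/2" "3/2"] by (simp add: add.commute)
  also have "cmod (z - 1/2) < 1/2"
    using z by (simp add: Dsk_def dist_norm norm_minus_commute)
  finally have "(cmod (1 + z))^2 \<le> 4"
    using power_mono[of "cmod (1 + z)" 2 2] by simp
  moreover have "1 \<le> Re (1 + z)" using Re_pos_if_in_Dsk[OF z] by simp
  moreover have "0 < (cmod (1 + z))^2" using one_le_norm_one_plus_squared[OF z] by linarith
  ultimately have "1/4 \<le> Re (1 + z) / (cmod (1 + z))^2"
    by (simp add: le_divide_eq)
  also have "\<dots> = Re (1 / (1 + z))" unfolding cmod_power2 by (simp add: Re_divide)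
  finally have "5/4 \<le> Re (1 + 1 / (1 + z))" by simp
  then show ?thesis using complex_Re_le_cmod order_trans by blast
qed

lemma open_Dsk: "open Dsk"
  by (simp add: Dsk_def)

lemma Dsk_subset_ball: "1/2 \<le> R \<Longrightarrow> Dsk \<subseteq> ball (1/2) R"
  unfolding Dsk_def by (rule subset_ball)

lemma Hinf_iff:
  "f \<in> Hinf \<longleftrightarrow> f holomorphic_on Dsk \<and> (\<exists>B. \<forall>z\<in>Dsk. cmod (f z) \<le> B) \<and> (\<forall>z. z \<notin> Dsk \<longrightarrow> f z = 0)"
  unfolding Hinf_def bounded_iff by auto

lemma norm_le_hnorm: assumes "f \<in> Hinf" "z \<in> Dsk" shows "cmod (f z) \<le> hnorm f"
proof -
  obtain B where "\<forall>z\<in>Dsk. cmod (f z) \<le> B" using assms(1) Hinf_iff by blast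
  then have "bdd_above ((\<lambda>z. cmod (f z)) ` Dsk)" by (auto intro: bdd_aboveI2)
  then show ?thesis unfolding hnorm_def using assms(2) by (rule cSUP_upper2) simp
qed

lemma hnorm_bound: "f \<in> Hinf \<Longrightarrow> \<forall>z\<in>Dsk. cmod (f z) \<le> hnorm f"
  using norm_le_hnorm by blast

lemma hnorm_le: "(\<And>z. z \<in> Dsk \<Longrightarrow> cmod (f z) \<le> M) \<Longrightarrow> hnorm f \<le> M"
  unfolding hnorm_def Dsk_def by (intro cSUP_least) auto

lemma Dsk_bound_nonneg: "\<forall>z\<in>Dsk. cmod (f z) \<le> M \<Longrightarrow> 0 \<le> M"
  by (metis norm_ge_zero order_trans centre_in_ball Dsk_def zero_less_divide_iff zero_less_one zero_less_numeral)

lemma zero_Hinf: "(\<lambda>z. 0) \<in> Hinf"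
  unfolding Hinf_iff by (intro conjI exI[of _ 0]) auto

lemma hnorm_nonneg: "f \<in> Hinf \<Longrightarrow> 0 \<le> hnorm f"
  using Dsk_bound_nonneg hnorm_bound by blast

lemma Hinf_add: assumes "f \<in> Hinf" "g \<in> Hinf" shows "(\<lambda>z. f z + g z) \<in> Hinf"
proof -
  have "cmod (f z + g z) \<le> hnorm f + hnorm g" if "z \<in> Dsk" for z
    using norm_le_hnorm[OF assms(1) that] norm_le_hnorm[OF assms(2) that]
    by (meson add_mono norm_triangle_ineq order_trans)
  with assms show ?thesis unfolding Hinf_iff by (auto intro: holomorphic_intros)
qed

lemma Hinf_cmult: assumes "f \<in> Hinf" shows "(\<lambda>z. c * f z) \<in> Hinf"
proof -
  have "cmod (c * f z) \<le> cmod c * hnorm f" if "z \<in> Dsk" for z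
    using norm_le_hnorm[OF assms that] by (simp add: norm_mult mult_left_mono)
  with assms show ?thesis unfolding Hinf_iff by (auto intro: holomorphic_intros)
qed

lemma Hinf_diff: "f \<in> Hinf \<Longrightarrow> g \<in> Hinf \<Longrightarrow> (\<lambda>z. f z - g z) \<in> Hinf"
  using Hinf_add[of f "\<lambda>z. -1 * g z"] Hinf_cmult[of g "-1"] by simp

lemma fnorm_bounds:
  assumes bound: "\<And>f. f \<in> Hinf \<Longrightarrow> cmod (\<phi> f) \<le> C * hnorm f" and "0 \<le> C"
  shows "fnorm \<phi> \<le> C" "0 \<le> fnorm \<phi>"
proof -
  let ?S = "{cmod (\<phi> f) | f. f \<in> Hinf \<and> hnorm f \<le> 1}"
  have ub: "x \<le> C" if mem: "x \<in> ?S" for x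
  proof -
    obtain f where f: "f \<in> Hinf" "hnorm f \<le> 1" and x: "x = cmod (\<phi> f)" using mem by blast
    show ?thesis using bound[OF f(1)] mult_left_le[OF f(2) \<open>0 \<le> C\<close>] x by linarith
  qed
  have "hnorm (\<lambda>z. 0) \<le> 1" by (rule hnorm_le) simp
  then have zero: "cmod (\<phi> (\<lambda>z. 0)) \<in> ?S" using zero_Hinf by blast
  show "fnorm \<phi> \<le> C" unfolding fnorm_def using zero ub by (intro cSup_least) auto
  have "cmod (\<phi> (\<lambda>z. 0)) \<le> fnorm \<phi>"
    unfolding fnorm_def using zero ub by (intro cSup_upper bdd_aboveI) auto
  then show "0 \<le> fnorm \<phi>" using norm_ge_zero order_trans by blast
qed

lemma holomorphic_on_suminf:
  fixes f :: "nat \<Rightarrow> complex \<Rightarrow> complex"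
  assumes S: "open S" and hol: "\<And>n. f n holomorphic_on S"
    and le: "\<And>n z. z \<in> S \<Longrightarrow> cmod (f n z) \<le> c n" and c: "summable c"
  shows "(\<lambda>z. \<Sum>n. f n z) holomorphic_on S"
proof (rule holomorphic_uniform_sequence[OF S])
  show "(\<lambda>z. \<Sum>i<n. f i z) holomorphic_on S" for n
    using hol by (intro holomorphic_on_sum) auto
  have lim: "uniform_limit S (\<lambda>n z. \<Sum>i<n. f i z) (\<lambda>z. \<Sum>n. f n z) sequentially"
    using le c by (rule Weierstrass_m_test)
  fix z assume "z \<in> S"
  then obtain d where "0 < d" "cball z d \<subseteq> S" using S open_contains_cball by blast
  then show "\<exists>d>0. cball z d \<subseteq> S \<and>
      uniform_limit (cball z d) (\<lambda>n z. \<Sum>i<n. f i z) (\<lambda>z. \<Sum>n. f n z) sequentially"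
    using uniform_limit_on_subset[OF lim] by blast
qed

lemma norm_Taylor_coeff_le:
  assumes hol: "f holomorphic_on ball \<xi> R" and "0 < \<rho>" "\<rho> < R"
    and le: "\<And>z. z \<in> ball \<xi> R \<Longrightarrow> cmod (f z) \<le> B"
  shows "cmod ((deriv ^^ k) f \<xi> / fact k) \<le> B / \<rho>^k"
proof -
  have sub: "cball \<xi> \<rho> \<subseteq> ball \<xi> R" using \<open>\<rho> < R\<close> by (auto simp: subset_iff)
  have "cmod ((deriv ^^ k) f \<xi>) \<le> fact k * B / \<rho>^k"
  proof (rule Cauchy_inequality)
    show "f holomorphic_on ball \<xi> \<rho>"
      using hol sub ball_subset_cball holomorphic_on_subset by blast
    show "continuous_on (cball \<xi> \<rho>) f"
      using holomorphic_on_imp_continuous_on holomorphic_on_subset[OF hol sub] by blast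
    show "cmod (f x) \<le> B" if "cmod (\<xi> - x) = \<rho>" for x
      using le that \<open>\<rho> < R\<close> by (simp add: dist_norm)
  qed (rule \<open>0 < \<rho>\<close>)
  then show ?thesis by (simp add: norm_divide divide_le_eq mult.commute)
qed

definition centred_monomial :: "nat \<Rightarrow> complex \<Rightarrow> complex" where
  "centred_monomial k z = (if z \<in> Dsk then (z - 1/2)^k else 0)"

lemma norm_centred_monomial_le: "cmod (centred_monomial k z) \<le> (1/2)^k"
  by (auto simp: centred_monomial_def Dsk_def dist_norm norm_minus_commute norm_power
      intro: power_mono)

lemma centred_monomial_Hinf: "centred_monomial k \<in> Hinf"
proof -
  have "(\<lambda>z. (z - 1/2)^k) holomorphic_on Dsk" by (intro holomorphic_intros)
  then have "centred_monomial k holomorphic_on Dsk"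
    by (rule holomorphic_transform) (simp add: centred_monomial_def)
  moreover have "\<forall>z\<in>Dsk. cmod (centred_monomial k z) \<le> (1/2)^k"
    using norm_centred_monomial_le by blast
  moreover have "\<forall>z. z \<notin> Dsk \<longrightarrow> centred_monomial k z = 0"
    by (simp add: centred_monomial_def)
  ultimately show ?thesis unfolding Hinf_iff by blast
qed

(* Linearity of X is only required on the ball: outside it X f may be a junk value
   of a divergent series. *)
locale Hinf_extension =
  fixes X :: "(complex \<Rightarrow> complex) \<Rightarrow> complex \<Rightarrow> complex" and R C :: real
  assumes radius_gt: "1/2 < R" and C_nonneg: "0 \<le> C"
    and holomorphic: "\<And>f. f \<in> Hinf \<Longrightarrow> X f holomorphic_on ball (1/2) R"
    and bounded: "\<And>f z. f \<in> Hinf \<Longrightarrow> z \<in> ball (1/2) R \<Longrightarrow> cmod (X f z) \<le> C * hnorm f"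
    and additive: "\<And>f g z. f \<in> Hinf \<Longrightarrow> g \<in> Hinf \<Longrightarrow> z \<in> ball (1/2) R \<Longrightarrow>
      X (\<lambda>w. f w + g w) z = X f z + X g z"
    and homogeneous: "\<And>f c z. f \<in> Hinf \<Longrightarrow> z \<in> ball (1/2) R \<Longrightarrow>
      X (\<lambda>w. c * f w) z = c * X f z"
begin

definition coeff :: "nat \<Rightarrow> (complex \<Rightarrow> complex) \<Rightarrow> complex" where
  "coeff k f = (deriv ^^ k) (X f) (1/2) / fact k"

lemma half_lt_radius: "0 < (1/2 :: real)" "1/2 < R"
  using radius_gt by auto

lemma centre_in_radius_ball: "1/2 \<in> ball (1/2 :: complex) R"
  using radius_gt by simp

lemma norm_coeff_le:
  assumes "f \<in> Hinf" "0 < \<rho>" "\<rho> < R"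
  shows "cmod (coeff k f) \<le> C / \<rho>^k * hnorm f"
proof -
  have "cmod (coeff k f) \<le> C * hnorm f / \<rho>^k"
    unfolding coeff_def using assms by (intro norm_Taylor_coeff_le[OF holomorphic]) (auto intro: bounded)
  then show ?thesis by simp
qed

lemma higher_deriv_cong_ball:
  assumes "\<And>z. z \<in> ball (1/2) R \<Longrightarrow> h z = h' z"
  shows "(deriv ^^ k) h (1/2) = (deriv ^^ k) h' (1/2)"
  using radius_gt assms
  by (intro higher_deriv_cong_ev) (auto simp: eventually_nhds intro!: exI[of _ "ball (1/2) R"])

lemma bdd_functional_coeff: "bdd_functional (coeff k)"
  unfolding bdd_functional_def
proof (intro conjI ballI allI)
  fix f g assume f: "f \<in> Hinf" and g: "g \<in> Hinf"
  have "(deriv ^^ k) (X (\<lambda>z. f z + g z)) (1/2) = (deriv ^^ k) (\<lambda>z. X f z + X g z) (1/2)"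
    using additive[OF f g] by (rule higher_deriv_cong_ball)
  also have "\<dots> = (deriv ^^ k) (X f) (1/2) + (deriv ^^ k) (X g) (1/2)"
    by (rule higher_deriv_add[OF holomorphic[OF f] holomorphic[OF g] open_ball centre_in_radius_ball])
  finally show "coeff k (\<lambda>z. f z + g z) = coeff k f + coeff k g"
    unfolding coeff_def by (simp add: add_divide_distrib)
next
  fix f c assume f: "f \<in> Hinf"
  have "(deriv ^^ k) (X (\<lambda>z. c * f z)) (1/2) = (deriv ^^ k) (\<lambda>z. c * X f z) (1/2)"
    using homogeneous[OF f] by (rule higher_deriv_cong_ball)
  also have "\<dots> = c * (deriv ^^ k) (X f) (1/2)"
    by (rule higher_deriv_cmult[OF holomorphic[OF f] centre_in_radius_ball open_ball])
  finally show "coeff k (\<lambda>z. c * f z) = c * coeff k f"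
    unfolding coeff_def by simp
next
  show "\<exists>B. \<forall>f\<in>Hinf. cmod (coeff k f) \<le> B * hnorm f"
    using norm_coeff_le[OF _ half_lt_radius] by blast
qed

lemma fnorm_coeff_le: "0 < \<rho> \<Longrightarrow> \<rho> < R \<Longrightarrow> fnorm (coeff k) \<le> C / \<rho>^k"
  using norm_coeff_le C_nonneg by (intro fnorm_bounds(1)) auto

lemma fnorm_coeff_nonneg: "0 \<le> fnorm (coeff k)"
  using fnorm_bounds(2)[OF norm_coeff_le[OF _ half_lt_radius]] C_nonneg by simp

lemma summable_fnorm_coeff: "summable (\<lambda>k. fnorm (coeff k) * hnorm (centred_monomial k))"
proof -
  define \<rho> where "\<rho> = (R + 1/2) / 2"
  have \<rho>: "0 < \<rho>" "\<rho> < R" "1/2 < \<rho>" using radius_gt by (auto simp: \<rho>_def)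
  have "fnorm (coeff k) * hnorm (centred_monomial k) \<le> C / \<rho>^k * (1/2)^k" for k
    using fnorm_coeff_le[OF \<rho>(1,2)] fnorm_coeff_nonneg C_nonneg \<rho>(1)
      hnorm_le[OF norm_centred_monomial_le] hnorm_nonneg[OF centred_monomial_Hinf]
    by (intro mult_mono) auto
  also have "C / \<rho>^k * (1/2)^k = C * (1 / (2 * \<rho>))^k" for k
    by (simp add: power_divide power_mult_distrib)
  finally have le: "norm (fnorm (coeff k) * hnorm (centred_monomial k)) \<le> C * (1 / (2 * \<rho>))^k" for k
    using fnorm_coeff_nonneg hnorm_nonneg[OF centred_monomial_Hinf] by simp
  have "summable (\<lambda>k. C * (1 / (2 * \<rho>))^k)" using \<rho> by (intro summable_mult summable_geometric) auto
  then show ?thesis using le by (rule summable_comparison_test')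
qed

lemma Taylor_expansion:
  assumes "f \<in> Hinf" "z \<in> Dsk"
  shows "(\<lambda>k. coeff k f * centred_monomial k z) sums X f z"
proof -
  have "z \<in> ball (1/2) R" using assms(2) Dsk_subset_ball[of R] radius_gt by auto
  with assms(2) show ?thesis
    using holomorphic_power_series[OF holomorphic[OF assms(1)]] by (simp add: coeff_def centred_monomial_def)
qed

theorem nuclear_Hinf_restriction:
  assumes "\<And>f z. f \<in> Hinf \<Longrightarrow> L f z = (if z \<in> Dsk then X f z else 0)"
  shows "nuclear_Hinf L"
  unfolding nuclear_Hinf_def
proof (intro exI conjI allI ballI)
  show "bdd_functional (coeff k)" for k by (rule bdd_functional_coeff)
  show "centred_monomial k \<in> Hinf" for k by (rule centred_monomial_Hinf)
  show "summable (\<lambda>k. fnorm (coeff k) * hnorm (centred_monomial k))" by (rule summable_fnorm_coeff)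
  show "L f z = (\<Sum>k. coeff k f * centred_monomial k z)" if "f \<in> Hinf" for f z
  proof (cases "z \<in> Dsk")
    case True
    then show ?thesis using assms[OF that] Taylor_expansion[OF that True] by (simp add: sums_iff)
  qed (simp add: assms[OF that] centred_monomial_def)
qed

end

lemma norm_weighted_pair_le:
  fixes x y b :: complex
  assumes "0 \<le> p" "p \<le> 1" "cmod x \<le> M\<^sub>1" "cmod y \<le> M\<^sub>0"
  shows "cmod (of_real p / b * x + (1 - of_real p) / b * y) \<le> (p * M\<^sub>1 + (1 - p) * M\<^sub>0) / cmod b"
proof -
  have "(1 - of_real p :: complex) = of_real (1 - p)" by simp
  then have "cmod (of_real p / b * x + (1 - of_real p) / b * y)
      \<le> cmod (of_real p / b * x) + cmod (of_real (1 - p) / b * y)"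
    by (metis norm_triangle_ineq)
  also have "\<dots> = (p * cmod x + (1 - p) * cmod y) / cmod b"
    using assms(1,2) by (simp add: norm_mult norm_divide add_divide_distrib del: of_real_diff)
  also have "\<dots> \<le> (p * M\<^sub>1 + (1 - p) * M\<^sub>0) / cmod b"
    using assms by (intro divide_right_mono add_mono mult_left_mono) auto
  finally show ?thesis .
qed

definition branch_term :: "real \<Rightarrow> (complex \<Rightarrow> complex) \<Rightarrow> complex \<Rightarrow> complex" where
  "branch_term p f u =
     of_real p / (1 + u)^2 * f (1 / (1 + u)) + (1 - of_real p) / (1 + u)^2 * f (1 - 1 / (1 + u))"

lemma branches_in_Dsk:
  assumes "0 < Re u" shows "1 + u \<noteq> 0" "1 / (1 + u) \<in> Dsk" "1 - 1 / (1 + u) \<in> Dsk"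
proof -
  show "1 / (1 + u) \<in> Dsk" "1 - 1 / (1 + u) \<in> Dsk"
    using assms by (simp_all add: inverse_one_plus_in_Dsk one_minus_inverse_one_plus_in_Dsk)
  have "1 \<le> cmod (1 + u)" using assms by (intro one_le_norm_one_plus) simp
  then show "1 + u \<noteq> 0" by auto
qed

lemma norm_branch_term_le:
  assumes p: "0 \<le> p" "p \<le> 1" and f: "\<forall>w\<in>Dsk. cmod (f w) \<le> M" and u: "0 < Re u"
  shows "cmod (branch_term p f u) \<le> M / (cmod (1 + u))^2"
proof -
  have "cmod (branch_term p f u) \<le> (p * M + (1 - p) * M) / cmod ((1 + u)^2)"
    unfolding branch_term_def
    using p bspec[OF f branches_in_Dsk(2)[OF u]] bspec[OF f branches_in_Dsk(3)[OF u]]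
    by (rule norm_weighted_pair_le)
  then show ?thesis by (simp add: algebra_simps norm_power)
qed

lemma holomorphic_on_branch_term:
  assumes f: "f holomorphic_on Dsk" and h: "h holomorphic_on S" and Re: "\<And>z. z \<in> S \<Longrightarrow> 0 < Re (h z)"
  shows "(\<lambda>z. branch_term p f (h z)) holomorphic_on S"
proof -
  note br = branches_in_Dsk[OF Re]
  have "(\<lambda>z. 1 / (1 + h z)) holomorphic_on S" using h br(1) by (auto intro!: holomorphic_intros)
  from holomorphic_on_compose_gen[OF this f]
  have f\<^sub>1: "(\<lambda>z. f (1 / (1 + h z))) holomorphic_on S" using br(2) by (auto simp: o_def)
  have "(\<lambda>z. 1 - 1 / (1 + h z)) holomorphic_on S" using h br(1) by (auto intro!: holomorphic_intros)
  from holomorphic_on_compose_gen[OF this f]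
  have f\<^sub>0: "(\<lambda>z. f (1 - 1 / (1 + h z))) holomorphic_on S" using br(3) by (auto simp: o_def)
  show ?thesis
    unfolding branch_term_def using h br(1) by (intro holomorphic_intros f\<^sub>1 f\<^sub>0) auto
qed

lemma branch_term_suminf:
  assumes "summable (\<lambda>k. h k (1 / (1 + u)))" "summable (\<lambda>k. h k (1 - 1 / (1 + u)))"
  shows "branch_term p (\<lambda>w. \<Sum>k. h k w) u = (\<Sum>k. branch_term p (h k) u)"
proof -
  have "branch_term p (\<lambda>w. \<Sum>k. h k w) u
      = (\<Sum>k. of_real p / (1 + u)^2 * h k (1 / (1 + u)))
        + (\<Sum>k. (1 - of_real p) / (1 + u)^2 * h k (1 - 1 / (1 + u)))"
    unfolding branch_term_def by (simp only: suminf_mult[OF assms(1)] suminf_mult[OF assms(2)])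
  also have "\<dots> = (\<Sum>k. branch_term p (h k) u)"
    unfolding branch_term_def using assms by (intro suminf_add summable_mult)
  finally show ?thesis .
qed

lemma Bop_in_Dsk: "z \<in> Dsk \<Longrightarrow> Bop p f z = branch_term p f z"
  by (simp add: Bop_def branch_term_def)

lemma Bop_add: "Bop p (\<lambda>z. f z + g z) = (\<lambda>z. Bop p f z + Bop p g z)"
  unfolding Bop_def by (auto simp: fun_eq_iff algebra_simps)

lemma Bop_diff: "Bop p (\<lambda>z. f z - g z) = (\<lambda>z. Bop p f z - Bop p g z)"
  unfolding Bop_def by (auto simp: fun_eq_iff algebra_simps)

lemma Bop_cmult: "Bop p (\<lambda>z. c * f z) = (\<lambda>z. c * Bop p f z)"
  unfolding Bop_def by (auto simp: fun_eq_iff algebra_simps)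

lemma Bop_holomorphic: "f holomorphic_on Dsk \<Longrightarrow> Bop p f holomorphic_on Dsk"
  using holomorphic_on_branch_term[of f "\<lambda>z. z" Dsk p] Re_pos_if_in_Dsk
  by (simp add: holomorphic_transform Bop_in_Dsk)

lemma norm_Bop_le_weighted:
  assumes "0 \<le> p" "p \<le> 1" "\<forall>w\<in>Dsk. cmod (f w) \<le> M" "z \<in> Dsk"
  shows "cmod (Bop p f z) \<le> M / (cmod (1 + z))^2"
  using norm_branch_term_le[OF assms(1-3) Re_pos_if_in_Dsk[OF assms(4)]] Bop_in_Dsk[OF assms(4)]
  by simp

lemma divide_le_self_if_one_le: "0 \<le> a \<Longrightarrow> 1 \<le> b \<Longrightarrow> a / b \<le> (a :: real)"
  using divide_left_mono[of 1 b a] by simp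

lemma norm_Bop_le:
  assumes "0 \<le> p" "p \<le> 1" "\<forall>w\<in>Dsk. cmod (f w) \<le> M" "z \<in> Dsk"
  shows "cmod (Bop p f z) \<le> M"
proof -
  have "0 \<le> M" using assms(3) by (rule Dsk_bound_nonneg)
  then have "M / (cmod (1 + z))^2 \<le> M"
    using one_le_norm_one_plus_squared[OF assms(4)] by (rule divide_le_self_if_one_le)
  then show ?thesis using norm_Bop_le_weighted[OF assms] by linarith
qed

lemma norm_Bop_Bop_le:
  assumes p: "0 \<le> p" "p \<le> 1" and f: "\<forall>w\<in>Dsk. cmod (f w) \<le> M" and z: "z \<in> Dsk"
  shows "cmod (Bop p (Bop p f) z) \<le> (1 - 9 * p / 25) * M"
proof -
  let ?w = "1 / (1 + z)"
  have M: "0 \<le> M" using f by (rule Dsk_bound_nonneg)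
  note w = branches_in_Dsk(2,3)[OF Re_pos_if_in_Dsk[OF z]]
  have "cmod (Bop p f ?w) \<le> M / (cmod (1 + ?w))^2" by (rule norm_Bop_le_weighted[OF p f w(1)])
  also have "\<dots> \<le> M / (5/4)^2"
    using norm_one_plus_inverse_ge[OF z] M by (intro divide_left_mono power_mono mult_pos_pos) auto
  finally have near: "cmod (Bop p f ?w) \<le> 16/25 * M" by (simp add: power2_eq_square)
  have "cmod (Bop p (Bop p f) z) \<le> (p * (16/25 * M) + (1 - p) * M) / cmod ((1 + z)^2)"
    unfolding Bop_in_Dsk[OF z] branch_term_def
    using p near norm_Bop_le[OF p f w(2)] by (rule norm_weighted_pair_le)
  also have "\<dots> \<le> p * (16/25 * M) + (1 - p) * M"
    using p M one_le_norm_one_plus_squared[OF z]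
    by (intro divide_le_self_if_one_le) (auto simp: norm_power)
  finally show ?thesis by (simp add: algebra_simps)
qed

lemma Bop_Hinf:
  assumes p: "0 \<le> p" "p \<le> 1" and f: "f \<in> Hinf" shows "Bop p f \<in> Hinf"
proof -
  have "Bop p f holomorphic_on Dsk" using f by (intro Bop_holomorphic) (simp add: Hinf_iff)
  moreover have "\<forall>z\<in>Dsk. cmod (Bop p f z) \<le> hnorm f"
    using norm_Bop_le[OF p hnorm_bound[OF f]] by blast
  moreover have "\<forall>z. z \<notin> Dsk \<longrightarrow> Bop p f z = 0" by (simp add: Bop_def)
  ultimately show ?thesis unfolding Hinf_iff by blast
qed

lemma Aterm_eq_branch_term: "Aterm p f z (n + 2) = branch_term p f (of_nat (n + 1) + z)"
proof -
  have "(of_nat (n + 2) + z :: complex) = 1 + (of_nat (n + 1) + z)" by simp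
  then show ?thesis unfolding Aterm_def branch_term_def by (simp only:)
qed

lemma norm_Aterm_le:
  assumes "0 \<le> p" "p \<le> 1" "\<forall>w\<in>Dsk. cmod (f w) \<le> M" "-1 < Re z"
  shows "cmod (Aterm p f z (n + 2)) \<le> M / real ((n + 1)^2)"
proof -
  let ?u = "of_nat (n + 1) + z"
  have u: "0 < Re ?u" using assms(4) by simp
  have "real n + 1 \<le> Re (1 + ?u)" using assms(4) by simp
  also have "\<dots> \<le> cmod (1 + ?u)" by (rule complex_Re_le_cmod)
  finally have big: "real n + 1 \<le> cmod (1 + ?u)" .
  have "cmod (Aterm p f z (n + 2)) \<le> M / (cmod (1 + ?u))^2"
    unfolding Aterm_eq_branch_term by (rule norm_branch_term_le[OF assms(1-3) u])
  also have "\<dots> \<le> M / (real n + 1)^2"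
    using Dsk_bound_nonneg[OF assms(3)] big by (intro divide_left_mono power_mono mult_pos_pos) auto
  finally show ?thesis by (simp add: add.commute)
qed

lemma holomorphic_on_Aterm:
  "f holomorphic_on Dsk \<Longrightarrow> (\<lambda>z. Aterm p f z (n + 2)) holomorphic_on {z. Re z > -1}"
  unfolding Aterm_eq_branch_term
  by (rule holomorphic_on_branch_term) (auto intro!: holomorphic_intros)

definition Aseries :: "real \<Rightarrow> (complex \<Rightarrow> complex) \<Rightarrow> complex \<Rightarrow> complex" where
  "Aseries p f z = (\<Sum>n. Aterm p f z (n + 2))"

lemma Aop_eq_Aseries: "Aop p f z = (if z \<in> Dsk then Aseries p f z else 0)"
  by (simp add: Aop_def Aseries_def)

lemma inverse_squares_sums_scaled: "(\<lambda>n. M / real ((n + 1)^2)) sums (pi^2 / 6 * M)"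
  using sums_mult2[OF inverse_squares_sums, of M] by simp

lemma summable_Aterm:
  assumes "0 \<le> p" "p \<le> 1" "\<forall>w\<in>Dsk. cmod (f w) \<le> M" "-1 < Re z"
  shows "summable (\<lambda>n. Aterm p f z (n + 2))"
  using sums_summable[OF inverse_squares_sums_scaled] norm_Aterm_le[OF assms]
  by (rule summable_comparison_test')

lemma norm_Aseries_le:
  assumes "0 \<le> p" "p \<le> 1" "\<forall>w\<in>Dsk. cmod (f w) \<le> M" "-1 < Re z"
  shows "cmod (Aseries p f z) \<le> pi^2 / 6 * M"
proof -
  have "cmod (Aseries p f z) \<le> (\<Sum>n. M / real ((n + 1)^2))"
    unfolding Aseries_def using norm_Aterm_le[OF assms] sums_summable[OF inverse_squares_sums_scaled]
    by (rule norm_suminf_le)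
  also have "\<dots> = pi^2 / 6 * M" using inverse_squares_sums_scaled by (rule sums_unique[symmetric])
  finally show ?thesis .
qed

lemma Aseries_holomorphic:
  assumes "0 \<le> p" "p \<le> 1" "f \<in> Hinf"
  shows "Aseries p f holomorphic_on {z. Re z > -1}"
  unfolding Aseries_def[abs_def]
proof (rule holomorphic_on_suminf[OF open_halfspace_Re_gt])
  show "(\<lambda>z. Aterm p f z (n + 2)) holomorphic_on {z. Re z > -1}" for n
    using assms(3) by (intro holomorphic_on_Aterm) (simp add: Hinf_iff)
  show "cmod (Aterm p f z (n + 2)) \<le> hnorm f / real ((n + 1)^2)" if "z \<in> {z. Re z > -1}" for n z
    using that by (intro norm_Aterm_le[OF assms(1,2) hnorm_bound[OF assms(3)]]) simp
  show "summable (\<lambda>n. hnorm f / real ((n + 1)^2))"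
    by (rule sums_summable[OF inverse_squares_sums_scaled])
qed

lemma Aseries_add:
  assumes "0 \<le> p" "p \<le> 1" "f \<in> Hinf" "g \<in> Hinf" "-1 < Re z"
  shows "Aseries p (\<lambda>w. f w + g w) z = Aseries p f z + Aseries p g z"
  unfolding Aseries_def
  using suminf_add[OF summable_Aterm[OF assms(1,2) hnorm_bound[OF assms(3)] assms(5)]
      summable_Aterm[OF assms(1,2) hnorm_bound[OF assms(4)] assms(5)]]
  by (simp add: Aterm_def algebra_simps)

lemma Aseries_cmult:
  assumes "0 \<le> p" "p \<le> 1" "f \<in> Hinf" "-1 < Re z"
  shows "Aseries p (\<lambda>w. c * f w) z = c * Aseries p f z"
  unfolding Aseries_def
  using suminf_mult[OF summable_Aterm[OF assms(1,2) hnorm_bound[OF assms(3)] assms(4)], of c]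
  by (simp add: Aterm_def algebra_simps)

lemma Aop_Hinf:
  assumes "0 \<le> p" "p \<le> 1" "f \<in> Hinf" shows "Aop p f \<in> Hinf"
proof -
  have sub: "Dsk \<subseteq> {z. Re z > -1}" using Re_pos_if_in_Dsk by fastforce
  have "Aop p f holomorphic_on Dsk"
    using holomorphic_on_subset[OF Aseries_holomorphic[OF assms] sub]
    by (rule holomorphic_transform) (simp add: Aop_eq_Aseries)
  moreover have "\<forall>z\<in>Dsk. cmod (Aop p f z) \<le> pi^2 / 6 * hnorm f"
    using sub norm_Aseries_le[OF assms(1,2) hnorm_bound[OF assms(3)]] by (auto simp: Aop_eq_Aseries)
  moreover have "\<forall>z. z \<notin> Dsk \<longrightarrow> Aop p f z = 0" by (simp add: Aop_def)
  ultimately show ?thesis unfolding Hinf_iff by blast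
qed

locale weighted_transfer =
  fixes p :: real
  assumes p_pos: "0 < p" and p_lt_1: "p < 1"
begin

abbreviation id_minus_Bop :: "(complex \<Rightarrow> complex) \<Rightarrow> complex \<Rightarrow> complex" where
  "id_minus_Bop f \<equiv> (\<lambda>z. f z - Bop p f z)"

lemma p_bounds: "0 \<le> p" "p \<le> 1"
  using p_pos p_lt_1 by auto

(* Only B_p^2 is a contraction, so the geometric rate per step is its square root. *)
definition rate :: real where
  "rate = sqrt (1 - 9 * p / 25)"

lemma rate_pos: "0 < rate" and rate_lt_1: "rate < 1" and rate_square: "rate * rate = 1 - 9 * p / 25"
  using p_pos p_lt_1 by (auto simp: rate_def)

lemma Bop_funpow_Hinf: "f \<in> Hinf \<Longrightarrow> (Bop p ^^ k) f \<in> Hinf"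
  by (induction k) (auto intro: Bop_Hinf[OF p_bounds])

lemma norm_Bop_funpow_le:
  assumes "\<forall>w\<in>Dsk. cmod (f w) \<le> M" "z \<in> Dsk"
  shows "cmod ((Bop p ^^ k) f z) \<le> M * rate^k / rate"
  using assms
proof (induction k arbitrary: f M z rule: nat_induct2)
  case 0
  have "M \<le> M / rate"
    using Dsk_bound_nonneg[OF 0(1)] rate_pos rate_lt_1 by (simp add: le_divide_eq mult_left_le)
  then show ?case using 0 by auto
next
  case 1
  then show ?case using norm_Bop_le[OF p_bounds] rate_pos by simp
next
  case (step n)
  have "\<forall>w\<in>Dsk. cmod (Bop p (Bop p f) w) \<le> (rate * rate) * M"
    using norm_Bop_Bop_le[OF p_bounds step(2)] by (simp add: rate_square)
  from step(1)[OF this step(3)]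
  have "cmod ((Bop p ^^ n) (Bop p (Bop p f)) z) \<le> M * rate^(n + 2) / rate"
    by (simp add: power_add power2_eq_square mult_ac)
  then show ?case by (simp add: funpow_Suc_right del: funpow.simps)
qed

lemma summable_rate_bound: "summable (\<lambda>k. M * rate^k / rate)"
  using summable_mult[OF summable_geometric[of rate], of "M / rate"] rate_pos rate_lt_1
  by (simp add: mult_ac)

definition neumann :: "(complex \<Rightarrow> complex) \<Rightarrow> complex \<Rightarrow> complex" where
  "neumann g z = (\<Sum>k. (Bop p ^^ k) g z)"

lemma summable_Bop_funpow:
  "\<forall>w\<in>Dsk. cmod (g w) \<le> M \<Longrightarrow> z \<in> Dsk \<Longrightarrow> summable (\<lambda>k. (Bop p ^^ k) g z)"
  using summable_rate_bound norm_Bop_funpow_le by (rule summable_comparison_test')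

lemma norm_neumann_le:
  assumes "\<forall>w\<in>Dsk. cmod (g w) \<le> M" "z \<in> Dsk"
  shows "cmod (neumann g z) \<le> M / (rate * (1 - rate))"
proof -
  have "cmod (neumann g z) \<le> (\<Sum>k. M * rate^k / rate)"
    unfolding neumann_def using norm_Bop_funpow_le[OF assms] summable_rate_bound
    by (rule norm_suminf_le)
  also have "\<dots> = M / (rate * (1 - rate))"
    using sums_unique[OF sums_mult[OF geometric_sums[of rate], of "M / rate"]] rate_pos rate_lt_1
    by (simp add: mult_ac)
  finally show ?thesis .
qed

lemma neumann_Hinf: assumes g: "g \<in> Hinf" shows "neumann g \<in> Hinf"
proof -
  have "neumann g holomorphic_on Dsk"
    unfolding neumann_def[abs_def]
  proof (rule holomorphic_on_suminf[OF open_Dsk])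
    show "(Bop p ^^ k) g holomorphic_on Dsk" for k
      using Bop_funpow_Hinf[OF g] by (simp add: Hinf_iff)
    show "cmod ((Bop p ^^ k) g z) \<le> hnorm g * rate^k / rate" if "z \<in> Dsk" for k z
      using hnorm_bound[OF g] that by (rule norm_Bop_funpow_le)
  qed (rule summable_rate_bound)
  moreover have "z \<notin> Dsk \<Longrightarrow> neumann g z = 0" for z
    using Bop_funpow_Hinf[OF g] by (simp add: neumann_def Hinf_iff)
  ultimately show ?thesis
    using norm_neumann_le[OF hnorm_bound[OF g]] unfolding Hinf_iff by blast
qed

lemma neumann_sub_Bop:
  assumes g: "g \<in> Hinf" shows "neumann g z - Bop p (neumann g) z = g z"
proof (cases "z \<in> Dsk")
  case False
  then show ?thesis using g Bop_funpow_Hinf[OF g] by (simp add: Bop_def neumann_def Hinf_iff)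
next
  case z: True
  note summable = summable_Bop_funpow[OF hnorm_bound[OF g]]
  note w = branches_in_Dsk(2,3)[OF Re_pos_if_in_Dsk[OF z]]
  have "Bop p (neumann g) z = (\<Sum>k. branch_term p ((Bop p ^^ k) g) z)"
    unfolding Bop_in_Dsk[OF z] neumann_def[abs_def]
    using summable[OF w(1)] summable[OF w(2)] by (rule branch_term_suminf)
  also have "\<dots> = (\<Sum>k. (Bop p ^^ Suc k) g z)"
    using z by (simp add: Bop_in_Dsk)
  also have "\<dots> = neumann g z - g z"
    unfolding neumann_def using suminf_split_head[OF summable[OF z]] by simp
  finally show ?thesis by simp
qed

lemma id_minus_Bop_neumann: "g \<in> Hinf \<Longrightarrow> id_minus_Bop (neumann g) = g"
  by (simp add: fun_eq_iff neumann_sub_Bop)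

lemma Bop_fixed_point_eq_0:
  assumes f: "f \<in> Hinf" and fixed: "Bop p f = f" shows "f = (\<lambda>z. 0)"
proof
  fix z
  have pow: "(Bop p ^^ k) f = f" for k by (induction k) (simp_all add: fixed)
  show "f z = 0"
  proof (cases "z \<in> Dsk")
    case False then show ?thesis using f unfolding Hinf_iff by blast
  next
    case z: True
    have "(\<lambda>k. hnorm f * rate^k / rate) \<longlonglongrightarrow> hnorm f * 0 / rate"
      using rate_pos rate_lt_1 by (intro tendsto_intros LIMSEQ_power_zero) auto
    then have lim: "(\<lambda>k. hnorm f * rate^k / rate) \<longlonglongrightarrow> 0" by simp
    have "cmod (f z) \<le> hnorm f * rate^k / rate" for k
      using norm_Bop_funpow_le[OF hnorm_bound[OF f] z, of k] pow by simp
    then have "cmod (f z) \<le> 0" using LIMSEQ_le_const[OF lim, of "cmod (f z)"] by auto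
    then show ?thesis by simp
  qed
qed

lemma inj_on_id_minus_Bop: "inj_on id_minus_Bop Hinf"
proof (rule inj_onI)
  fix f g assume f: "f \<in> Hinf" and g: "g \<in> Hinf" and eq: "id_minus_Bop f = id_minus_Bop g"
  have "Bop p (\<lambda>z. f z - g z) z = f z - g z" for z
  proof -
    have "f z - Bop p f z = g z - Bop p g z" using fun_cong[OF eq, of z] by simp
    then show ?thesis unfolding Bop_diff by algebra
  qed
  then have "Bop p (\<lambda>z. f z - g z) = (\<lambda>z. f z - g z)" by (simp add: fun_eq_iff)
  then have "(\<lambda>z. f z - g z) = (\<lambda>z. 0)" using Hinf_diff[OF f g] Bop_fixed_point_eq_0 by blast
  then show "f = g" by (simp add: fun_eq_iff)
qed

lemma bij_betw_id_minus_Bop: "bij_betw id_minus_Bop Hinf Hinf"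
  unfolding bij_betw_def
proof (intro conjI inj_on_id_minus_Bop subset_antisym subsetI)
  fix h assume "h \<in> id_minus_Bop ` Hinf"
  then obtain f where "f \<in> Hinf" "h = id_minus_Bop f" by blast
  then show "h \<in> Hinf" by (simp add: Hinf_diff Bop_Hinf[OF p_bounds])
next
  fix g assume g: "g \<in> Hinf"
  show "g \<in> id_minus_Bop ` Hinf"
    by (rule image_eqI[of g id_minus_Bop "neumann g", OF id_minus_Bop_neumann[OF g, symmetric] neumann_Hinf[OF g]])
qed

lemma inv_id_minus_Bop: assumes "g \<in> Hinf" shows "inv_into Hinf id_minus_Bop g = neumann g"
  by (rule inv_into_f_eq[OF inj_on_id_minus_Bop neumann_Hinf[OF assms]])
    (simp add: id_minus_Bop_neumann[OF assms])

lemma neumann_add: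
  assumes f: "f \<in> Hinf" and g: "g \<in> Hinf"
  shows "neumann (\<lambda>z. f z + g z) = (\<lambda>z. neumann f z + neumann g z)"
proof (rule inj_onD[OF inj_on_id_minus_Bop], rule ext)
  fix z
  have "neumann f z + neumann g z - Bop p (\<lambda>z. neumann f z + neumann g z) z
      = (neumann f z - Bop p (neumann f) z) + (neumann g z - Bop p (neumann g) z)"
    by (simp add: Bop_add algebra_simps)
  also have "\<dots> = neumann (\<lambda>z. f z + g z) z - Bop p (neumann (\<lambda>z. f z + g z)) z"
    by (simp add: neumann_sub_Bop f g Hinf_add)
  finally show "neumann (\<lambda>z. f z + g z) z - Bop p (neumann (\<lambda>z. f z + g z)) z
      = neumann f z + neumann g z - Bop p (\<lambda>z. neumann f z + neumann g z) z" ..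
qed (use f g in \<open>auto intro: neumann_Hinf Hinf_add\<close>)

lemma neumann_cmult:
  assumes f: "f \<in> Hinf"
  shows "neumann (\<lambda>z. c * f z) = (\<lambda>z. c * neumann f z)"
proof (rule inj_onD[OF inj_on_id_minus_Bop], rule ext)
  fix z
  have "c * neumann f z - Bop p (\<lambda>z. c * neumann f z) z = c * (neumann f z - Bop p (neumann f) z)"
    by (simp add: Bop_cmult algebra_simps)
  also have "\<dots> = neumann (\<lambda>z. c * f z) z - Bop p (neumann (\<lambda>z. c * f z)) z"
    by (simp add: neumann_sub_Bop f Hinf_cmult)
  finally show "neumann (\<lambda>z. c * f z) z - Bop p (neumann (\<lambda>z. c * f z)) z
      = c * neumann f z - Bop p (\<lambda>z. c * neumann f z) z" ..
qed (use f in \<open>auto intro: neumann_Hinf Hinf_cmult\<close>)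

lemma nuclear_Aop_inverse: "nuclear_Hinf (\<lambda>f. Aop p (inv_into Hinf id_minus_Bop f))"
proof -
  have half_plane: "-1 < Re z" if "z \<in> ball (1/2) (3/2)" for z
    using that abs_Re_le_cmod[of "z - 1/2"] by (simp add: dist_norm norm_minus_commute)
  interpret Hinf_extension "\<lambda>f. Aseries p (neumann f)" "3/2" "pi^2 / 6 / (rate * (1 - rate))"
  proof
    show "0 \<le> pi^2 / 6 / (rate * (1 - rate))" using rate_pos rate_lt_1 by simp
  next
    fix f assume f: "f \<in> Hinf"
    show "Aseries p (neumann f) holomorphic_on ball (1/2) (3/2)"
      by (rule holomorphic_on_subset[OF Aseries_holomorphic[OF p_bounds neumann_Hinf[OF f]]])
        (use half_plane in auto)
  next
    fix f and z :: complex assume f: "f \<in> Hinf" and z: "z \<in> ball (1/2) (3/2)"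
    have "\<forall>w\<in>Dsk. cmod (neumann f w) \<le> hnorm f / (rate * (1 - rate))"
      using norm_neumann_le[OF hnorm_bound[OF f]] by blast
    from norm_Aseries_le[OF p_bounds this half_plane[OF z]]
    show "cmod (Aseries p (neumann f) z) \<le> pi^2 / 6 / (rate * (1 - rate)) * hnorm f"
      by simp
  next
    fix f g and z :: complex assume f: "f \<in> Hinf" and g: "g \<in> Hinf" and z: "z \<in> ball (1/2) (3/2)"
    show "Aseries p (neumann (\<lambda>w. f w + g w)) z = Aseries p (neumann f) z + Aseries p (neumann g) z"
      unfolding neumann_add[OF f g]
      by (rule Aseries_add[OF p_bounds neumann_Hinf[OF f] neumann_Hinf[OF g] half_plane[OF z]])
  next
    fix f c and z :: complex assume f: "f \<in> Hinf" and z: "z \<in> ball (1/2) (3/2)"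
    show "Aseries p (neumann (\<lambda>w. c * f w)) z = c * Aseries p (neumann f) z"
      unfolding neumann_cmult[OF f]
      by (rule Aseries_cmult[OF p_bounds neumann_Hinf[OF f] half_plane[OF z]])
  qed simp
  show ?thesis by (rule nuclear_Hinf_restriction) (simp add: Aop_eq_Aseries inv_id_minus_Bop)
qed

end

theorem mainTheorem6:
  fixes p :: real
  assumes "0 < p" and "p < 1"
  shows "(\<forall>f\<in>Hinf. Bop p f \<in> Hinf)
    \<and> bij_betw (\<lambda>f z. f z - Bop p f z) Hinf Hinf
    \<and> (\<forall>f\<in>Hinf. \<forall>z\<in>Dsk. summable (\<lambda>n. Aterm p f z (n + 2)))
    \<and> (\<forall>f\<in>Hinf. Aop p f \<in> Hinf)
    \<and> nuclear_Hinf (\<lambda>f. Aop p (inv_into Hinf (\<lambda>h z. h z - Bop p h z) f))"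
proof -
  interpret weighted_transfer p using assms by unfold_locales
  have "summable (\<lambda>n. Aterm p f z (n + 2))" if "f \<in> Hinf" "z \<in> Dsk" for f z
    using summable_Aterm[OF p_bounds hnorm_bound[OF that(1)]] Re_pos_if_in_Dsk[OF that(2)] by simp
  then show ?thesis
    using Bop_Hinf[OF p_bounds] bij_betw_id_minus_Bop Aop_Hinf[OF p_bounds] nuclear_Aop_inverse by blast
qed

end
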